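(* Let $\alpha\ge0$ and $\phi(x)=x(1-x)^{-\alpha}$, with Taylor coefficients $\phi_m=m(\alpha)_{m-1}$ at $0$. Then $\phi\in\mathcal S$ if and only if $\alpha\in[0,1]$.
   Context: $(a)_j=a(a+1)\cdots(a+j-1)$ denotes the Pochhammer symbol, with $(a)_0=1$. For $\phi(x)=\sum_{m\ge1}\phi_mx^m/m!$ with $\phi_m\ge0$, $\phi_1>0$ and radius of convergence $x_0\in(0,\infty]$ (here $x_0=1$), we write $\phi\in\mathcal S$ if $\phi$ is finite on the whole half-line $(-\infty,x_0)$ and $\phi'$ is absolutely monotone there, i.e. $\phi^{(n)}(x)\ge0$ for all $n\ge1$ and all $x<x_0$. *)

theory Defs
  imports "HOL-Analysis.Analysis"
begin

text \<open>A function phi with Taylor coefficients c (phi(x) = sum_{m>=1} c m x^m / m!),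
  c m >= 0, c 1 > 0, series converging to phi on |x| < x0, is in S if phi is finite
  (real valued and smooth) on the half-line (-inf, x0) and phi' is absolutely monotone there,
  i.e. the n-th derivative of phi is >= 0 for all n >= 1 and all x < x0.\<close>

definition abs_mono_deriv_on :: "(real \<Rightarrow> real) \<Rightarrow> real \<Rightarrow> bool" where
  "abs_mono_deriv_on f x0 \<longleftrightarrow>
     (\<forall>n. \<forall>x. x < x0 \<longrightarrow> ((deriv ^^ n) f has_real_derivative (deriv ^^ Suc n) f x) (at x)) \<and>
     (\<forall>n\<ge>1. \<forall>x. x < x0 \<longrightarrow> (deriv ^^ n) f x \<ge> 0)"

definition in_class_S :: "(nat \<Rightarrow> real) \<Rightarrow> real \<Rightarrow> (real \<Rightarrow> real) \<Rightarrow> bool" where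
  "in_class_S c x0 f \<longleftrightarrow>
     c 0 = 0 \<and> (\<forall>m. c m \<ge> 0) \<and> c 1 > 0 \<and>
     (\<forall>x. \<bar>x\<bar> < x0 \<longrightarrow> (\<lambda>m. c m * x ^ m / fact m) sums f x) \<and>
     abs_mono_deriv_on f x0"

end

theory Submission
  imports Defs
begin

text \<open>Since \<open>x = 1 - (1 - x)\<close>, \<open>\<phi>(x) = (1 - x) powr (-\<alpha>) - (1 - x) powr (1 - \<alpha>)\<close>, so the
  \<open>n\<close>-th derivative is \<open>(\<alpha>)_n (1 - x) powr (-\<alpha> - n) - (\<alpha> - 1)_n (1 - x) powr (1 - \<alpha> - n)\<close>.
  For \<open>\<alpha> \<le> 1\<close> and \<open>n \<ge> 1\<close> the factor \<open>(\<alpha> - 1)_n = (\<alpha> - 1) (\<alpha>)_(n-1)\<close> is \<open>\<le> 0\<close>, so all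
  derivatives are nonnegative. For \<open>\<alpha> > 1\<close>,
  \<open>\<phi>'(x) = (1 - x) powr (-\<alpha> - 1) (\<alpha> - (\<alpha> - 1)(1 - x))\<close> is negative once \<open>1 - x > \<alpha>/(\<alpha> - 1)\<close>.\<close>

lemma higher_deriv_eq_on_open:
  fixes f :: "nat \<Rightarrow> 'a::real_normed_field \<Rightarrow> 'a"
  assumes "open S"
    and "\<And>n x. x \<in> S \<Longrightarrow> (f n has_field_derivative f (Suc n) x) (at x)"
    and "x \<in> S"
  shows "(deriv ^^ n) (f 0) x = f n x"
  using assms(3)
proof (induction n arbitrary: x)
  case (Suc n)
  have "((deriv ^^ n) (f 0) has_field_derivative f (Suc n) x) (at x)"
    by (rule has_field_derivative_transform_within_open[OF assms(2) \<open>open S\<close>])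
       (use Suc in auto)
  then show ?case by (simp add: DERIV_imp_deriv)
qed simp

lemma one_minus_powr_has_real_derivative:
  assumes "x < (1::real)"
  shows "((\<lambda>x. (1 - x) powr p) has_real_derivative - p * (1 - x) powr (p - 1)) (at x)"
  using assms by (auto intro!: derivative_eq_intros)

lemma one_minus_powr_plus_one:
  assumes "x < (1::real)"
  shows "(1 - x) powr (p + 1) = (1 - x) * (1 - x) powr p"
  using assms powr_add[of "1 - x" p 1] by simp

lemma pochhammer_real_nonneg:
  assumes "0 \<le> (a::real)"
  shows "0 \<le> pochhammer a n"
  unfolding pochhammer_prod using assms by (intro prod_nonneg) auto

lemma pochhammer_minus_one_nonpos:
  assumes "0 \<le> a" "a \<le> 1" "n \<ge> 1"
  shows "pochhammer (a - 1) n \<le> (0::real)"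
proof -
  obtain k where "n = Suc k" using assms(3) by (cases n) auto
  then have "pochhammer (a - 1) n = (a - 1) * pochhammer a k"
    by (simp add: pochhammer_rec)
  then show ?thesis
    using assms pochhammer_real_nonneg[of a k] by (simp add: mult_nonpos_nonneg)
qed

lemma x_times_one_minus_powr_sums:
  assumes "\<bar>x\<bar> < (1::real)"
  shows "(\<lambda>m. real m * pochhammer a (m - 1) * x ^ m / fact m) sums (x * (1 - x) powr (- a))"
proof -
  have "(\<lambda>n. ((- a) gchoose n) * (- x) ^ n) sums (1 + - x) powr (- a)"
    using assms by (intro gen_binomial_real) simp
  moreover have "((- a) gchoose n) * (- x) ^ n = pochhammer a n * x ^ n / fact n" for n
    by (simp add: gbinomial_pochhammer power_mult_distrib[symmetric])
  ultimately have "(\<lambda>n. x * (pochhammer a n * x ^ n / fact n)) sums (x * (1 - x) powr (- a))"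
    by (intro sums_mult) simp
  moreover have "(\<lambda>n. x * (pochhammer a n * x ^ n / fact n))
      = (\<lambda>n. real (Suc n) * pochhammer a (Suc n - 1) * x ^ Suc n / fact (Suc n))"
    by (simp add: fact_Suc field_simps del: of_nat_Suc)
  ultimately show ?thesis
    using sums_Suc[where f = "\<lambda>m. real m * pochhammer a (m - 1) * x ^ m / fact m"] by simp
qed

definition phi_deriv :: "real \<Rightarrow> nat \<Rightarrow> real \<Rightarrow> real" where
  "phi_deriv a n x = pochhammer a n * (1 - x) powr (- a - real n)
                   - pochhammer (a - 1) n * (1 - x) powr (1 - a - real n)"

lemma phi_deriv_0:
  assumes "x < 1"
  shows "phi_deriv a 0 x = x * (1 - x) powr (- a)"
  using one_minus_powr_plus_one[OF assms, of "- a"]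
  by (simp add: phi_deriv_def algebra_simps)

lemma phi_deriv_has_real_derivative:
  assumes "x < 1"
  shows "(phi_deriv a n has_real_derivative phi_deriv a (Suc n) x) (at x)"
proof -
  have "(phi_deriv a n has_real_derivative
      pochhammer a n * (- (- a - real n) * (1 - x) powr (- a - real n - 1))
      - pochhammer (a - 1) n * (- (1 - a - real n) * (1 - x) powr (1 - a - real n - 1))) (at x)"
    unfolding phi_deriv_def
    by (intro DERIV_diff DERIV_cmult one_minus_powr_has_real_derivative assms)
  then show ?thesis
    by (simp add: phi_deriv_def pochhammer_rec' algebra_simps)
qed

lemma higher_deriv_phi:
  assumes "x < 1"
  shows "(deriv ^^ n) (\<lambda>x. x * (1 - x) powr (- a)) x = phi_deriv a n x"
proof -
  have "(deriv ^^ n) (phi_deriv a 0) x = phi_deriv a n x"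
    by (rule higher_deriv_eq_on_open[of "{..<1}"]) (use assms phi_deriv_has_real_derivative in auto)
  moreover have "(deriv ^^ n) (phi_deriv a 0) x = (deriv ^^ n) (\<lambda>x. x * (1 - x) powr (- a)) x"
  proof (rule higher_deriv_cong_ev)
    have "eventually (\<lambda>y. y \<in> {..<1}) (nhds x)"
      by (rule eventually_nhds_in_open) (use assms in auto)
    then show "eventually (\<lambda>y. phi_deriv a 0 y = y * (1 - y) powr (- a)) (nhds x)"
      by eventually_elim (simp add: phi_deriv_0)
  qed simp
  ultimately show ?thesis by simp
qed

lemma phi_deriv_nonneg:
  assumes "0 \<le> a" "a \<le> 1" "1 \<le> n"
  shows "0 \<le> phi_deriv a n x"
proof -
  have "0 \<le> pochhammer a n * (1 - x) powr (- a - real n)"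
    using assms(1) by (simp add: pochhammer_real_nonneg)
  moreover have "pochhammer (a - 1) n * (1 - x) powr (1 - a - real n) \<le> 0"
    using pochhammer_minus_one_nonpos[OF assms] by (simp add: mult_nonpos_nonneg)
  ultimately show ?thesis
    by (simp add: phi_deriv_def)
qed

lemma phi_deriv_1_eq:
  assumes "x < 1"
  shows "phi_deriv a 1 x = (1 - x) powr (- a - 1) * (a - (a - 1) * (1 - x))"
proof -
  have "(1 - x) powr (- a) = (1 - x) * (1 - x) powr (- a - 1)"
    using one_minus_powr_plus_one[OF assms, of "- a - 1"] by simp
  then have "phi_deriv a 1 x = a * (1 - x) powr (- a - 1) - (a - 1) * ((1 - x) * (1 - x) powr (- a - 1))"
    by (simp add: phi_deriv_def)
  then show ?thesis
    by (simp add: algebra_simps)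
qed

lemma phi_deriv_1_neg_somewhere:
  assumes "1 < a"
  obtains x where "x < 1" and "phi_deriv a 1 x < 0"
proof
  let ?x = "1 - 2 * a / (a - 1)"
  show "?x < 1"
    using assms by simp
  then have "phi_deriv a 1 ?x = (2 * a / (a - 1)) powr (- a - 1) * (a - (a - 1) * (2 * a / (a - 1)))"
    by (subst phi_deriv_1_eq) simp_all
  moreover have "0 < (2 * a / (a - 1)) powr (- a - 1)"
    using assms by simp
  moreover have "a - (a - 1) * (2 * a / (a - 1)) < 0"
    using assms by simp
  ultimately show "phi_deriv a 1 ?x < 0"
    by (simp add: mult_pos_neg)
qed

lemma higher_deriv_phi_has_real_derivative:
  assumes "x < 1"
  shows "((deriv ^^ n) (\<lambda>x. x * (1 - x) powr (- a)) has_real_derivative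
           (deriv ^^ Suc n) (\<lambda>x. x * (1 - x) powr (- a)) x) (at x)"
proof -
  have "((deriv ^^ n) (\<lambda>x. x * (1 - x) powr (- a)) has_real_derivative phi_deriv a (Suc n) x) (at x)"
    by (rule has_field_derivative_transform_within_open[OF phi_deriv_has_real_derivative[OF assms],
          of "{..<1}"])
       (use assms higher_deriv_phi in auto)
  then show ?thesis
    by (simp only: higher_deriv_phi[OF assms])
qed

theorem proposition14:
  fixes \<alpha> :: real
  assumes "\<alpha> \<ge> 0"
  shows "in_class_S (\<lambda>m. real m * pochhammer \<alpha> (m - 1)) 1 (\<lambda>x. x * (1 - x) powr (- \<alpha>))
         \<longleftrightarrow> \<alpha> \<in> {0..1}"
proof
  assume "in_class_S (\<lambda>m. real m * pochhammer \<alpha> (m - 1)) 1 (\<lambda>x. x * (1 - x) powr (- \<alpha>))"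
  then have "0 \<le> phi_deriv \<alpha> 1 x" if "x < 1" for x
    using higher_deriv_phi[OF that, of 1] that
    unfolding in_class_S_def abs_mono_deriv_on_def by (metis order_refl)
  then have "\<not> 1 < \<alpha>"
    using phi_deriv_1_neg_somewhere[of \<alpha>] by (metis not_le)
  then show "\<alpha> \<in> {0..1}"
    using assms by simp
next
  assume "\<alpha> \<in> {0..1}"
  then show "in_class_S (\<lambda>m. real m * pochhammer \<alpha> (m - 1)) 1 (\<lambda>x. x * (1 - x) powr (- \<alpha>))"
    unfolding in_class_S_def abs_mono_deriv_on_def
    using x_times_one_minus_powr_sums higher_deriv_phi_has_real_derivative
    by (auto simp: higher_deriv_phi phi_deriv_nonneg pochhammer_real_nonneg)
qed

end
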